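(* Let $d$ be a positive integer, $M\subseteq\mathbb Z_{>0}$ a finite set, and $Q$ a non-empty finite set of primes such that the elements of $M\cup Q$ are pairwise coprime, $M\cap Q=\emptyset$, and $\min(Q)>d$. Let $b_m\in\mathbb Z$ for $m\in M$ and $c_{q,i}\in\mathbb Z$ for $q\in Q$, $1\le i\le d$. Consider the system $\mathcal S$ of simultaneous congruences and non-congruences in the unknown $x$: $x\equiv b_m \pmod m$ for all $m\in M$, and $x\not\equiv c_{q,i}\pmod q$ for all $q\in Q$ and $1\le i\le d$. Then for every $k\in\mathbb Z$, $\mathcal S$ has a solution in the interval $\{k,k+1,\dots,k+\prod M\cdot E(Q,d)\}$, where $$E(Q,d)=\big((d+1)\cdot|Q|\big)^{4(d+1)^2(3+\ln\ln(|Q|+1))}.$$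
   Context: $\prod M$ denotes the product of all elements of $M$ (equal to $1$ if $M=\emptyset$); $|Q|$ is the cardinality of $Q$. *)

theory Defs
  imports "HOL-Analysis.Analysis" "HOL-Number_Theory.Number_Theory"
begin

definition E_bound :: "nat set \<Rightarrow> nat \<Rightarrow> real" where
  "E_bound Q d = (real (d + 1) * real (card Q)) powr
      (4 * real (d + 1)^2 * (3 + ln (ln (real (card Q) + 1))))"

end

theory Submission
  imports Defs
begin

(* Count the integers x of an interval of length L that lie in the residue class r mod P = prod M
   (by the Chinese remainder theorem this is what the congruences x = b m mod m describe) and avoid,
   for every q in Q, the at most d residues c q i mod q.  Inclusion-exclusion over the primes of Q,
   truncated after an odd depth m, bounds this count from below (Bonferroni).  Each of its terms
   counts a residue class modulo P times a product of primes, which is L / (P * prod q) up to an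
   error of 1, so the count is at least L / P * T_m - (1 + d |Q|)^m, where T_m is the degree-m
   truncation of prod (1 - w q / q) and w q <= d is the number of forbidden residues mod q.
   Since w q / q <= d / (d + 1), the full product is at least exp (- (d + 1) s) with
   s = sum w q / q, and T_m differs from it by at most s^(m+1) / (m+1)!, which is small once
   m is about (d + 4) s.  Finally s <= d * sum 1 / q <= d * (2 ln ln (|Q| + 1) + 5) by a
   Chebyshev-type bound obtained from the central binomial coefficient, and for this m the error
   term (1 + d |Q|)^m exp ((d + 1) s + 1) is at most E(Q, d). *)

section \<open>Truncated inclusion-exclusion\<close>

definition sifted :: "('i \<Rightarrow> 'a set) \<Rightarrow> 'i list \<Rightarrow> 'a set \<Rightarrow> 'a set" where
  "sifted B qs A = {x\<in>A. \<forall>q\<in>set qs. x \<notin> B q}"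

text \<open>Inclusion-exclusion for \<open>card (sifted B qs A)\<close> truncated at depth \<open>m\<close>: the sum of
  \<open>(-1)^card T * card (A \<inter> \<Inter>q\<in>T. B q)\<close> over the sub-lists \<open>T\<close> of \<open>qs\<close>
  with at most \<open>m\<close> elements.\<close>
fun bonferroni_sum :: "('i \<Rightarrow> 'a set) \<Rightarrow> nat \<Rightarrow> 'i list \<Rightarrow> 'a set \<Rightarrow> int" where
  "bonferroni_sum B m [] A = int (card A)"
| "bonferroni_sum B 0 (q # qs) A = int (card A)"
| "bonferroni_sum B (Suc m) (q # qs) A =
     bonferroni_sum B (Suc m) qs A - bonferroni_sum B m qs (A \<inter> B q)"

lemma card_sifted_Cons:
  assumes "finite A"
  shows "int (card (sifted B (q # qs) A))
    = int (card (sifted B qs A)) - int (card (sifted B qs (A \<inter> B q)))"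
proof -
  have "sifted B qs A = sifted B (q # qs) A \<union> sifted B qs (A \<inter> B q)"
    by (auto simp: sifted_def)
  moreover have "card (sifted B (q # qs) A \<union> sifted B qs (A \<inter> B q))
      = card (sifted B (q # qs) A) + card (sifted B qs (A \<inter> B q))"
    by (rule card_Un_disjoint) (use assms in \<open>auto simp: sifted_def\<close>)
  ultimately show ?thesis by simp
qed

lemma bonferroni_inequalities:
  assumes "finite A"
  shows "(even m \<longrightarrow> int (card (sifted B qs A)) \<le> bonferroni_sum B m qs A)
       \<and> (odd m \<longrightarrow> bonferroni_sum B m qs A \<le> int (card (sifted B qs A)))"
  using assms
proof (induction qs arbitrary: m A)
  case Nil
  then show ?case by (simp add: sifted_def)
next
  case (Cons q qs)
  show ?case
  proof (cases m)
    case 0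
    have "card (sifted B (q # qs) A) \<le> card A"
      by (rule card_mono) (use Cons.prems in \<open>auto simp: sifted_def\<close>)
    then show ?thesis using 0 by simp
  next
    case (Suc m')
    have "finite (A \<inter> B q)" using Cons.prems by simp
    then show ?thesis
      using Cons.IH[OF Cons.prems, of m] Cons.IH[of "A \<inter> B q" m'] card_sifted_Cons[OF Cons.prems, of B q qs] Suc
      by auto
  qed
qed

lemma bonferroni_sum_Un:
  assumes "finite A" "finite A'" "A \<inter> A' = {}"
  shows "bonferroni_sum B m qs (A \<union> A') = bonferroni_sum B m qs A + bonferroni_sum B m qs A'"
  using assms
proof (induction qs arbitrary: m A A')
  case Nil
  then show ?case by (simp add: card_Un_disjoint)
next
  case (Cons q qs)
  show ?case
  proof (cases m)
    case 0
    then show ?thesis using Cons.prems by (simp add: card_Un_disjoint)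
  next
    case (Suc m')
    have "(A \<union> A') \<inter> B q = (A \<inter> B q) \<union> (A' \<inter> B q)" by auto
    then have "bonferroni_sum B m' qs ((A \<union> A') \<inter> B q)
        = bonferroni_sum B m' qs (A \<inter> B q) + bonferroni_sum B m' qs (A' \<inter> B q)"
      using Cons.IH[of "A \<inter> B q" "A' \<inter> B q" m'] Cons.prems by auto
    then show ?thesis using Suc Cons.IH[OF Cons.prems, of m] by simp
  qed
qed

lemma bonferroni_sum_UN:
  assumes "finite I" "\<And>i. i \<in> I \<Longrightarrow> finite (F i)"
    and "\<And>i j. i \<in> I \<Longrightarrow> j \<in> I \<Longrightarrow> i \<noteq> j \<Longrightarrow> F i \<inter> F j = {}"
  shows "bonferroni_sum B m qs (\<Union>i\<in>I. F i) = (\<Sum>i\<in>I. bonferroni_sum B m qs (F i))"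
  using assms
proof (induction I rule: finite_induct)
  case empty
  show ?case using bonferroni_sum_Un[of "{}" "{}" B m qs] by simp
next
  case (insert i I)
  have "bonferroni_sum B m qs (F i \<union> (\<Union>j\<in>I. F j))
      = bonferroni_sum B m qs (F i) + bonferroni_sum B m qs (\<Union>j\<in>I. F j)"
    by (rule bonferroni_sum_Un) (use insert in auto)
  then show ?case using insert by simp
qed

text \<open>\<open>trunc_prod_minus x m qs\<close> and \<open>trunc_prod_plus w m qs\<close> are the expansions of
  \<open>\<Prod>q\<leftarrow>qs. 1 - x q\<close> and \<open>\<Prod>q\<leftarrow>qs. 1 + w q\<close> truncated after the terms of degree \<open>m\<close>;
  they are the main term and the error term of \<^const>\<open>bonferroni_sum\<close> on residue classes.\<close>
fun trunc_prod_minus :: "('i \<Rightarrow> real) \<Rightarrow> nat \<Rightarrow> 'i list \<Rightarrow> real" where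
  "trunc_prod_minus x m [] = 1"
| "trunc_prod_minus x 0 (q # qs) = 1"
| "trunc_prod_minus x (Suc m) (q # qs) = trunc_prod_minus x (Suc m) qs - x q * trunc_prod_minus x m qs"

fun trunc_prod_plus :: "('i \<Rightarrow> real) \<Rightarrow> nat \<Rightarrow> 'i list \<Rightarrow> real" where
  "trunc_prod_plus w m [] = 1"
| "trunc_prod_plus w 0 (q # qs) = 1"
| "trunc_prod_plus w (Suc m) (q # qs) = trunc_prod_plus w (Suc m) qs + w q * trunc_prod_plus w m qs"

lemma trunc_prod_minus_0 [simp]: "trunc_prod_minus x 0 qs = 1"
  by (cases qs) auto

lemma trunc_prod_plus_0 [simp]: "trunc_prod_plus w 0 qs = 1"
  by (cases qs) auto

lemma trunc_prod_plus_nonneg: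
  assumes "\<forall>q\<in>set qs. 0 \<le> w q"
  shows "0 \<le> trunc_prod_plus w m qs"
  using assms by (induction w m qs rule: trunc_prod_plus.induct) auto

lemma trunc_prod_plus_le_power:
  assumes "\<forall>q\<in>set qs. 0 \<le> w q \<and> w q \<le> D"
  shows "trunc_prod_plus w m qs \<le> (1 + D * length qs) ^ m"
  using assms
proof (induction qs arbitrary: m)
  case Nil
  then show ?case by simp
next
  case (Cons q qs)
  show ?case
  proof (cases m)
    case 0
    then show ?thesis by simp
  next
    case (Suc m')
    let ?a = "1 + D * length qs"
    have D: "0 \<le> D" using Cons.prems by auto
    have "w q * trunc_prod_plus w m' qs \<le> D * ?a ^ m'"
      using Cons.prems Cons.IH[of m'] trunc_prod_plus_nonneg[of qs w m'] by (intro mult_mono) auto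
    then have "trunc_prod_plus w m (q # qs) \<le> ?a ^ Suc m' + D * ?a ^ m'"
      using Cons.IH[of m] Cons.prems Suc by simp
    also have "\<dots> = ?a ^ m' * (?a + D)" by (simp add: algebra_simps)
    also have "\<dots> \<le> (?a + D) ^ m' * (?a + D)"
      using D by (intro mult_right_mono power_mono) auto
    finally show ?thesis using Suc by (simp add: algebra_simps)
  qed
qed

lemma power_Suc_add_ge:
  fixes s x :: real
  assumes "0 \<le> s" "0 \<le> x"
  shows "s ^ Suc k + real (Suc k) * x * s ^ k \<le> (s + x) ^ Suc k"
proof (induction k)
  case 0
  then show ?case by simp
next
  case (Suc k)
  have "s ^ Suc (Suc k) + real (Suc (Suc k)) * x * s ^ Suc k
      \<le> (s + x) * (s ^ Suc k + real (Suc k) * x * s ^ k)"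
    using assms by (simp add: algebra_simps)
  also have "\<dots> \<le> (s + x) * (s + x) ^ Suc k"
    using Suc assms by (intro mult_left_mono) auto
  finally show ?case by simp
qed

lemma prod_list_one_minus_bounds:
  fixes x :: "'i \<Rightarrow> real"
  assumes "\<forall>q\<in>set qs. 0 \<le> x q \<and> x q \<le> 1"
  shows "0 \<le> (\<Prod>q\<leftarrow>qs. 1 - x q) \<and> (\<Prod>q\<leftarrow>qs. 1 - x q) \<le> 1"
  using assms by (induction qs) (auto intro: mult_le_one)

lemma trunc_prod_minus_approx:
  assumes "\<forall>q\<in>set qs. 0 \<le> x q \<and> x q \<le> 1"
  shows "\<bar>trunc_prod_minus x m qs - (\<Prod>q\<leftarrow>qs. 1 - x q)\<bar>
    \<le> (\<Sum>q\<leftarrow>qs. x q) ^ Suc m / fact (Suc m)"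
  using assms
proof (induction qs arbitrary: m)
  case Nil
  then show ?case by simp
next
  case (Cons q qs)
  let ?P = "\<Prod>q\<leftarrow>qs. 1 - x q" and ?s = "\<Sum>q\<leftarrow>qs. x q"
  have xq: "0 \<le> x q" "x q \<le> 1" using Cons.prems by auto
  have P: "0 \<le> ?P" "?P \<le> 1" using prod_list_one_minus_bounds Cons.prems by auto
  have s: "0 \<le> ?s" using Cons.prems by (auto intro!: sum_list_nonneg)
  show ?case
  proof (cases m)
    case 0
    have "\<bar>1 - ?P\<bar> \<le> ?s" using Cons.IH[of 0] Cons.prems by simp
    moreover have "x q * ?P \<le> x q" using xq P mult_left_le[of ?P "x q"] by simp
    moreover have "0 \<le> x q * ?P" using xq P by simp
    ultimately show ?thesis using 0 by (simp add: algebra_simps abs_if split: if_splits)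
  next
    case (Suc m')
    have IH: "\<bar>trunc_prod_minus x (Suc m') qs - ?P\<bar> \<le> ?s ^ Suc (Suc m') / fact (Suc (Suc m'))"
      "\<bar>trunc_prod_minus x m' qs - ?P\<bar> \<le> ?s ^ Suc m' / fact (Suc m')"
      by (rule Cons.IH; use Cons.prems in simp)+
    have "trunc_prod_minus x m (q # qs) - (\<Prod>q\<leftarrow>q # qs. 1 - x q)
        = (trunc_prod_minus x (Suc m') qs - ?P) - x q * (trunc_prod_minus x m' qs - ?P)"
      using Suc by (simp add: algebra_simps)
    then have "\<bar>trunc_prod_minus x m (q # qs) - (\<Prod>q\<leftarrow>q # qs. 1 - x q)\<bar>
        \<le> \<bar>trunc_prod_minus x (Suc m') qs - ?P\<bar> + x q * \<bar>trunc_prod_minus x m' qs - ?P\<bar>"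
      using xq abs_triangle_ineq4[of "trunc_prod_minus x (Suc m') qs - ?P" "x q * (trunc_prod_minus x m' qs - ?P)"]
      by (simp add: abs_mult)
    also have "\<dots> \<le> ?s ^ Suc (Suc m') / fact (Suc (Suc m')) + x q * (?s ^ Suc m' / fact (Suc m'))"
      using IH xq by (intro add_mono mult_left_mono) auto
    also have "\<dots> = (?s ^ Suc (Suc m') + real (Suc (Suc m')) * x q * ?s ^ Suc m') / fact (Suc (Suc m'))"
      by (simp add: field_simps del: of_nat_Suc)
    also have "\<dots> \<le> (?s + x q) ^ Suc (Suc m') / fact (Suc (Suc m'))"
      using s xq by (intro divide_right_mono power_Suc_add_ge) auto
    finally show ?thesis using Suc by (simp add: add.commute)
  qed
qed

section \<open>Sifting a residue class in an interval\<close>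

lemma int_le_div_iff_mult_le:
  fixes j n P :: int
  assumes "P > 0"
  shows "j \<le> n div P \<longleftrightarrow> j * P \<le> n"
proof
  assume "j \<le> n div P"
  then have "j * P \<le> n div P * P" using assms by (simp add: mult_right_mono)
  also have "\<dots> \<le> n" using assms by (simp add: minus_mod_eq_div_mult[symmetric])
  finally show "j * P \<le> n" .
next
  assume "j * P \<le> n"
  then have "j * P div P \<le> n div P" using assms by (rule zdiv_mono1)
  then show "j \<le> n div P" using assms by simp
qed

lemma div_mult_bounds_int:
  fixes n P :: int
  assumes "P > 0"
  shows "n - P < n div P * P" "n div P * P \<le> n"
  using assms pos_mod_bound[of P n] pos_mod_sign[of P n] minus_mod_eq_div_mult[of n P] by linarith+

lemma card_cong_interval:
  fixes a b r P :: int
  assumes P: "P > 0" and ab: "a \<le> b"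
  shows "\<bar>real (card {x\<in>{a..b}. [x = r] (mod P)}) - real_of_int (b - a + 1) / real_of_int P\<bar> \<le> 1"
proof -
  define lo hi where "lo = (a - 1 - r) div P" and "hi = (b - r) div P"
  have "a \<le> r + j * P \<longleftrightarrow> lo < j" "r + j * P \<le> b \<longleftrightarrow> j \<le> hi" for j
    using int_le_div_iff_mult_le[OF P, of j "a - 1 - r"] int_le_div_iff_mult_le[OF P, of j "b - r"]
    unfolding lo_def hi_def by linarith+
  then have range: "a \<le> r + j * P \<and> r + j * P \<le> b \<longleftrightarrow> j \<in> {lo<..hi}" for j
    by auto
  have "{x\<in>{a..b}. [x = r] (mod P)} = (\<lambda>j. r + j * P) ` {lo<..hi}"
  proof (intro equalityI subsetI)
    fix x assume x: "x \<in> {x\<in>{a..b}. [x = r] (mod P)}"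
    then obtain j where "x - r = P * j" by (auto simp: cong_iff_dvd_diff elim: dvdE)
    then have x_eq: "x = r + j * P" by (simp add: algebra_simps)
    then have "j \<in> {lo<..hi}" using x range[of j] by simp
    with x_eq show "x \<in> (\<lambda>j. r + j * P) ` {lo<..hi}" by blast
  next
    fix x assume "x \<in> (\<lambda>j. r + j * P) ` {lo<..hi}"
    then obtain j where j: "j \<in> {lo<..hi}" and x_eq: "x = r + j * P" by blast
    have "[x = r] (mod P)" unfolding x_eq cong_iff_dvd_diff by simp
    with j x_eq range[of j] show "x \<in> {x\<in>{a..b}. [x = r] (mod P)}" by simp
  qed
  moreover have "inj_on (\<lambda>j. r + j * P) {lo<..hi}" using P by (auto simp: inj_on_def)
  ultimately have card: "card {x\<in>{a..b}. [x = r] (mod P)} = nat (hi - lo)"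
    by (simp add: card_image)
  have "lo \<le> hi" unfolding lo_def hi_def using P ab by (intro zdiv_mono1) auto
  have "(hi - lo) * P = hi * P - lo * P" by (simp add: left_diff_distrib)
  then have "\<bar>(hi - lo) * P - (b - a + 1)\<bar> \<le> P"
    using div_mult_bounds_int[OF P, of "b - r"] div_mult_bounds_int[OF P, of "a - 1 - r"]
    unfolding lo_def hi_def by linarith
  then have "\<bar>real_of_int (hi - lo) * real_of_int P - real_of_int (b - a + 1)\<bar> \<le> real_of_int P"
    by (metis of_int_abs of_int_diff of_int_le_iff of_int_mult)
  then have "\<bar>real_of_int (hi - lo) - real_of_int (b - a + 1) / real_of_int P\<bar> \<le> 1"
    using P by (simp add: field_simps abs_divide)
  with card \<open>lo \<le> hi\<close> show ?thesis by simp
qed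

lemma cong_pair_iff_cong_mult:
  fixes m n u v :: int
  assumes "coprime m n"
  obtains r where "\<And>x. [x = u] (mod m) \<and> [x = v] (mod n) \<longleftrightarrow> [x = r] (mod m * n)"
proof -
  obtain r where r: "[r = u] (mod m)" "[r = v] (mod n)"
    using binary_chinese_remainder_int[OF assms] by blast
  have "[x = u] (mod m) \<and> [x = v] (mod n) \<longleftrightarrow> [x = r] (mod m * n)" for x
  proof
    assume "[x = u] (mod m) \<and> [x = v] (mod n)"
    with r have "[x = r] (mod m)" "[x = r] (mod n)" by (meson cong_sym cong_trans)+
    then show "[x = r] (mod m * n)" using assms by (rule coprime_cong_mult)
  next
    assume "[x = r] (mod m * n)"
    then have "[x = r] (mod m)" "[x = r] (mod n)"
      by (auto intro: cong_dvd_modulus)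
    with r show "[x = u] (mod m) \<and> [x = v] (mod n)" by (meson cong_trans)
  qed
  then show ?thesis by (rule that)
qed

lemma chinese_remainder_iff_int:
  fixes M :: "nat set" and b :: "nat \<Rightarrow> int"
  assumes "finite M" "\<forall>u\<in>M. \<forall>v\<in>M. u \<noteq> v \<longrightarrow> coprime u v"
  obtains r where "\<And>x. (\<forall>m\<in>M. [x = b m] (mod int m)) \<longleftrightarrow> [x = r] (mod int (\<Prod>M))"
proof -
  have "\<exists>r. \<forall>x. (\<forall>m\<in>M. [x = b m] (mod int m)) \<longleftrightarrow> [x = r] (mod int (\<Prod>M))"
    using assms
  proof (induction M rule: finite_induct)
    case empty
    then show ?case by simp
  next
    case (insert m M)
    then obtain r where r: "\<And>x. (\<forall>m\<in>M. [x = b m] (mod int m)) \<longleftrightarrow> [x = r] (mod int (\<Prod>M))"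
      by auto
    have "coprime m (\<Prod>M)" using insert by (auto intro: prod_coprime_right)
    then have "coprime (int m) (int (\<Prod>M))" by (simp only: coprime_int_iff)
    then obtain r' where
      "\<And>x. [x = b m] (mod int m) \<and> [x = r] (mod int (\<Prod>M)) \<longleftrightarrow> [x = r'] (mod int m * int (\<Prod>M))"
      by (rule cong_pair_iff_cong_mult[where u = "b m" and v = r]) blast
    then have "(\<forall>m'\<in>insert m M. [x = b m'] (mod int m')) \<longleftrightarrow> [x = r'] (mod int (\<Prod>(insert m M)))" for x
      using r[of x] insert(1,2) by simp
    then show ?case by blast
  qed
  then show ?thesis using that by blast
qed

definition mod_in :: "(nat \<Rightarrow> int set) \<Rightarrow> nat \<Rightarrow> int set" where
  "mod_in C q = {x. x mod int q \<in> C q}"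

lemma mem_mod_in_iff:
  assumes "C q \<subseteq> {0..<int q}"
  shows "x \<in> mod_in C q \<longleftrightarrow> (\<exists>c\<in>C q. [x = c] (mod int q))"
proof
  assume "x \<in> mod_in C q"
  moreover have "[x = x mod int q] (mod int q)" by (simp add: cong_def)
  ultimately show "\<exists>c\<in>C q. [x = c] (mod int q)" unfolding mod_in_def by blast
next
  assume "\<exists>c\<in>C q. [x = c] (mod int q)"
  then obtain c where "c \<in> C q" "x mod int q = c mod int q" by (auto simp: cong_def)
  then show "x \<in> mod_in C q" using assms mod_pos_pos_trivial[of c "int q"] by (auto simp: mod_in_def)
qed

lemma cong_Int_mod_in_eq_UN:
  fixes P :: int and q :: nat
  assumes "coprime P (int q)" "C q \<subseteq> {0..<int q}"
  obtains F where "\<And>c. [F c = c] (mod int q)"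
    and "\<And>A. {x\<in>A. [x = r] (mod P)} \<inter> mod_in C q = (\<Union>c\<in>C q. {x\<in>A. [x = F c] (mod P * int q)})"
proof -
  have "\<forall>c. \<exists>r'. \<forall>x. [x = r] (mod P) \<and> [x = c] (mod int q) \<longleftrightarrow> [x = r'] (mod P * int q)"
    using cong_pair_iff_cong_mult[OF assms(1)] by metis
  then obtain F where F: "\<And>c x. [x = r] (mod P) \<and> [x = c] (mod int q) \<longleftrightarrow> [x = F c] (mod P * int q)"
    by metis
  show ?thesis
  proof (rule that)
    show "[F c = c] (mod int q)" for c using F[of "F c" c] by simp
    show "{x\<in>A. [x = r] (mod P)} \<inter> mod_in C q = (\<Union>c\<in>C q. {x\<in>A. [x = F c] (mod P * int q)})" for A
    proof (intro equalityI subsetI)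
      fix x assume "x \<in> {x\<in>A. [x = r] (mod P)} \<inter> mod_in C q"
      then obtain c where "x \<in> A" "c \<in> C q" "[x = r] (mod P)" "[x = c] (mod int q)"
        using mem_mod_in_iff[where C = C, OF assms(2)] by auto
      then show "x \<in> (\<Union>c\<in>C q. {x\<in>A. [x = F c] (mod P * int q)})" using F[of x c] by auto
    next
      fix x assume "x \<in> (\<Union>c\<in>C q. {x\<in>A. [x = F c] (mod P * int q)})"
      then obtain c where "x \<in> A" "c \<in> C q" "[x = F c] (mod P * int q)" by auto
      then show "x \<in> {x\<in>A. [x = r] (mod P)} \<inter> mod_in C q"
        using F[of x c] mem_mod_in_iff[where C = C, OF assms(2)] by auto
    qed
  qed
qed

lemma bonferroni_sum_cong_Int_mod_in:
  fixes P a b r :: int and q :: nat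
  assumes "coprime P (int q)" "C q \<subseteq> {0..<int q}"
  obtains F where "\<And>m qs. bonferroni_sum (mod_in C) m qs ({x\<in>{a..b}. [x = r] (mod P)} \<inter> mod_in C q)
    = (\<Sum>c\<in>C q. bonferroni_sum (mod_in C) m qs {x\<in>{a..b}. [x = F c] (mod P * int q)})"
proof -
  let ?A = "\<lambda>r'. {x\<in>{a..b}. [x = r'] (mod P * int q)}"
  obtain F where F: "\<And>c. [F c = c] (mod int q)"
    and split: "\<And>A. {x\<in>A. [x = r] (mod P)} \<inter> mod_in C q = (\<Union>c\<in>C q. {x\<in>A. [x = F c] (mod P * int q)})"
    using cong_Int_mod_in_eq_UN[where C = C, OF assms] by blast
  have "?A (F c) \<inter> ?A (F c') = {}" if "c \<in> C q" "c' \<in> C q" "c \<noteq> c'" for c c'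
  proof (rule ccontr)
    assume "?A (F c) \<inter> ?A (F c') \<noteq> {}"
    then obtain x where "[x = F c] (mod P * int q)" "[x = F c'] (mod P * int q)" by blast
    then have "[x = F c] (mod int q)" "[x = F c'] (mod int q)" by (auto intro: cong_dvd_modulus)
    then have "[c = c'] (mod int q)" using F[of c] F[of c'] by (meson cong_sym cong_trans)
    then have "c = c'" using assms(2) that(1,2) by (intro cong_less_imp_eq_int) auto
    with \<open>c \<noteq> c'\<close> show False ..
  qed
  moreover have "finite (?A r')" for r' by (rule finite_subset[of _ "{a..b}"]) auto
  moreover have "finite (C q)" using assms(2) by (rule finite_subset) simp
  ultimately have "bonferroni_sum (mod_in C) m qs ({x\<in>{a..b}. [x = r] (mod P)} \<inter> mod_in C q)
      = (\<Sum>c\<in>C q. bonferroni_sum (mod_in C) m qs (?A (F c)))" for m qs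
    unfolding split[of "{a..b}"] by (intro bonferroni_sum_UN) simp_all
  then show ?thesis by (rule that)
qed

lemma bonferroni_sum_cong_interval:
  fixes P a b r :: int
  assumes "distinct qs" "\<forall>q\<in>set qs. prime q" "\<forall>q\<in>set qs. C q \<subseteq> {0..<int q}"
    and "P > 0" "\<forall>q\<in>set qs. coprime P (int q)" and "a \<le> b"
  shows "\<bar>real_of_int (bonferroni_sum (mod_in C) m qs {x\<in>{a..b}. [x = r] (mod P)})
      - real_of_int (b - a + 1) / real_of_int P * trunc_prod_minus (\<lambda>q. real (card (C q)) / real q) m qs\<bar>
    \<le> trunc_prod_plus (\<lambda>q. real (card (C q))) m qs"
  using assms
proof (induction qs arbitrary: m r P)
  case Nil
  then show ?case using card_cong_interval[of P a b r] by simp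
next
  case (Cons q qs)
  let ?A = "\<lambda>r P. {x\<in>{a..b}. [x = r] (mod P)}"
  let ?L = "real_of_int (b - a + 1)"
  let ?x = "\<lambda>q. real (card (C q)) / real q" and ?w = "\<lambda>q. real (card (C q))"
  let ?err = "\<lambda>m r P. real_of_int (bonferroni_sum (mod_in C) m qs (?A r P)) - ?L / real_of_int P * trunc_prod_minus ?x m qs"
  show ?case
  proof (cases m)
    case 0
    then show ?thesis using card_cong_interval[of P a b r] Cons.prems by simp
  next
    case (Suc m')
    have q: "prime q" "C q \<subseteq> {0..<int q}" "coprime P (int q)" using Cons.prems by auto
    then have "q > 0" by (simp add: prime_gt_0_nat)
    obtain F where sum_split: "\<And>m qs. bonferroni_sum (mod_in C) m qs (?A r P \<inter> mod_in C q)
        = (\<Sum>c\<in>C q. bonferroni_sum (mod_in C) m qs (?A (F c) (P * int q)))"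
      using bonferroni_sum_cong_Int_mod_in[where C = C, OF q(3) q(2)] by blast
    have "\<forall>q'\<in>set qs. coprime (P * int q) (int q')"
    proof
      fix q' assume "q' \<in> set qs"
      with Cons.prems have "prime q'" "q \<noteq> q'" "coprime P (int q')" by auto
      with q(1) show "coprime (P * int q) (int q')" by (simp add: primes_coprime)
    qed
    then have IH: "\<bar>?err m' (F c) (P * int q)\<bar> \<le> trunc_prod_plus ?w m' qs" for c
      using Cons.IH[of "P * int q" m' "F c"] Cons.prems \<open>q > 0\<close> by simp
    have "?L / real_of_int P * (?x q * trunc_prod_minus ?x m' qs)
        = (\<Sum>c\<in>C q. ?L / real_of_int (P * int q) * trunc_prod_minus ?x m' qs)"
      using \<open>q > 0\<close> by simp
    then have "real_of_int (bonferroni_sum (mod_in C) m (q # qs) (?A r P))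
        - ?L / real_of_int P * trunc_prod_minus ?x m (q # qs)
        = ?err (Suc m') r P - (\<Sum>c\<in>C q. ?err m' (F c) (P * int q))"
      using Suc sum_split[of m' qs] by (simp add: sum_subtractf algebra_simps)
    also have "\<bar>\<dots>\<bar> \<le> trunc_prod_plus ?w (Suc m') qs + (\<Sum>c\<in>C q. trunc_prod_plus ?w m' qs)"
    proof -
      have "\<bar>?err (Suc m') r P\<bar> \<le> trunc_prod_plus ?w (Suc m') qs"
        using Cons.IH[of P "Suc m'" r] Cons.prems by simp
      moreover have "\<bar>\<Sum>c\<in>C q. ?err m' (F c) (P * int q)\<bar> \<le> (\<Sum>c\<in>C q. trunc_prod_plus ?w m' qs)"
        by (rule order_trans[OF sum_abs sum_mono]) (rule IH)
      ultimately show ?thesis by linarith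
    qed
    also have "\<dots> = trunc_prod_plus ?w m (q # qs)" using Suc by simp
    finally show ?thesis .
  qed
qed

lemma sifted_cong_interval_nonempty:
  fixes P a b r :: int
  assumes "distinct qs" "\<forall>q\<in>set qs. prime q" "\<forall>q\<in>set qs. C q \<subseteq> {0..<int q}"
    and "P > 0" "\<forall>q\<in>set qs. coprime P (int q)" and "a \<le> b" and "odd m"
    and "trunc_prod_plus (\<lambda>q. real (card (C q))) m qs
      < real_of_int (b - a + 1) / real_of_int P * trunc_prod_minus (\<lambda>q. real (card (C q)) / real q) m qs"
  shows "\<exists>x\<in>{a..b}. [x = r] (mod P) \<and> (\<forall>q\<in>set qs. x mod int q \<notin> C q)"
proof -
  let ?A = "{x\<in>{a..b}. [x = r] (mod P)}"
  have "0 < bonferroni_sum (mod_in C) m qs ?A"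
    using bonferroni_sum_cong_interval[OF assms(1-6), of m r] assms(8) by linarith
  also have "\<dots> \<le> int (card (sifted (mod_in C) qs ?A))"
  proof -
    have "finite ?A" by (rule finite_subset[of _ "{a..b}"]) auto
    then show ?thesis using bonferroni_inequalities[of ?A m "mod_in C" qs] \<open>odd m\<close> by blast
  qed
  finally have "sifted (mod_in C) qs ?A \<noteq> {}" by (metis card.empty of_nat_0 less_irrefl)
  then show ?thesis by (auto simp: sifted_def mod_in_def)
qed

section \<open>Sums of reciprocals of primes\<close>

lemma power_card_primes_between_le:
  fixes y :: nat
  shows "y ^ card {p. prime p \<and> y < p \<and> p \<le> 2 * y} \<le> 2 ^ (2 * y)"
proof -
  let ?S = "{p. prime p \<and> y < p \<and> p \<le> 2 * y}"
  have "p dvd (2 * y choose y)" if "p \<in> ?S" for p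
  proof -
    have p: "prime p" "y < p" "p \<le> 2 * y" using that by auto
    have "fact y * fact y * (2 * y choose y) = (fact (2 * y) :: nat)"
      using binomial_fact_lemma[of y "2 * y"] by simp
    moreover have "p dvd fact (2 * y)" "\<not> p dvd (fact y :: nat)"
      using p by (simp_all add: prime_dvd_fact_iff)
    ultimately show ?thesis using p(1) by (metis prime_dvd_mult_iff)
  qed
  then have "[2 * y choose y = 0] (mod \<Prod>?S)"
    by (intro coprime_cong_prod_nat) (auto simp: cong_0_iff primes_coprime)
  then have "\<Prod>?S \<le> 2 * y choose y"
    by (intro dvd_imp_le) (simp_all add: cong_0_iff zero_less_binomial)
  also have "\<dots> \<le> 2 ^ (2 * y)" by (rule binomial_le_pow2)
  finally have "\<Prod>?S \<le> 2 ^ (2 * y)" .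
  moreover have "y ^ card ?S \<le> \<Prod>?S"
    using prod_mono[of ?S "\<lambda>_. y" id] by simp
  ultimately show ?thesis by linarith
qed

lemma sum_inverse_primes_dyadic_le:
  assumes "j \<ge> 1"
  shows "(\<Sum>p\<in>{p::nat. prime p \<and> 2 ^ j < p \<and> p \<le> 2 ^ Suc j}. 1 / real p) \<le> 2 / real j"
proof -
  let ?S = "{p::nat. prime p \<and> 2 ^ j < p \<and> p \<le> 2 ^ Suc j}"
  have "(2::nat) ^ (j * card ?S) \<le> 2 ^ (2 * 2 ^ j)"
    using power_card_primes_between_le[of "2 ^ j"] by (simp add: power_mult mult.commute)
  then have "j * card ?S \<le> 2 * 2 ^ j" by simp
  then have "real (j * card ?S) \<le> real (2 * 2 ^ j)" by (rule of_nat_mono)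
  then have "real j * real (card ?S) \<le> 2 * 2 ^ j" by simp
  have "(\<Sum>p\<in>?S. 1 / real p) \<le> (\<Sum>p\<in>?S. 1 / 2 ^ j)"
    by (rule sum_mono) (auto simp: frac_le)
  also have "\<dots> = real (card ?S) / 2 ^ j" by simp
  also have "\<dots> \<le> 2 / real j"
    using \<open>real j * real (card ?S) \<le> 2 * 2 ^ j\<close> assms by (simp add: field_simps)
  finally show ?thesis .
qed

lemma sum_inverse_primes_le_harm:
  "(\<Sum>p\<in>{p::nat. prime p \<and> p \<le> 2 ^ Suc J}. 1 / real p) \<le> 1 / 2 + 2 * harm J"
proof (induction J)
  case 0
  have "{p::nat. prime p \<and> p \<le> 2} = {2}"
    using prime_ge_2_nat by (auto intro: antisym)
  then show ?case by (simp add: harm_def)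
next
  case (Suc J)
  let ?A = "{p::nat. prime p \<and> p \<le> 2 ^ Suc J}"
  let ?S = "{p::nat. prime p \<and> 2 ^ Suc J < p \<and> p \<le> 2 ^ Suc (Suc J)}"
  have "{p::nat. prime p \<and> p \<le> 2 ^ Suc (Suc J)} = ?A \<union> ?S" by auto
  moreover have "finite ?A" "finite ?S"
    by (rule finite_subset[of _ "{..2 ^ Suc (Suc J)}"]; auto)+
  ultimately have "(\<Sum>p\<in>{p::nat. prime p \<and> p \<le> 2 ^ Suc (Suc J)}. 1 / real p)
      = (\<Sum>p\<in>?A. 1 / real p) + (\<Sum>p\<in>?S. 1 / real p)"
    by (simp add: sum.union_disjoint disjoint_iff)
  also have "\<dots> \<le> 1 / 2 + 2 * harm J + 2 / real (Suc J)"
    using Suc sum_inverse_primes_dyadic_le[of "Suc J"] by simp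
  also have "\<dots> = 1 / 2 + 2 * harm (Suc J)" by (simp add: harm_Suc field_simps)
  finally show ?case .
qed

lemma ln_log2_le_ln_ln:
  assumes "J \<ge> 1" "2 ^ J \<le> n"
  shows "ln (real J) \<le> ln (ln (real n + 1)) + 1 / 2"
proof -
  have ln2: "2 / 3 \<le> ln (2::real)" by (rule ln2_ge_two_thirds)
  have "n \<ge> 2" using assms power_increasing[of 1 J "2::nat"] by simp
  then have ln_n: "0 < ln (real n)" by simp
  have "real J * ln 2 = ln (real (2 ^ J))" by (simp add: ln_realpow)
  also have "\<dots> \<le> ln (real n)"
    using assms \<open>n \<ge> 2\<close> by (subst ln_le_cancel_iff) (auto simp del: of_nat_power)
  finally have "real J \<le> ln (real n) / ln 2" using ln2 by (simp add: field_simps)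
  then have "ln (real J) \<le> ln (ln (real n) / ln 2)" using assms by simp
  also have "\<dots> = ln (ln (real n)) + ln (1 / ln 2)" using ln_n ln2 by (simp add: ln_div)
  also have "ln (1 / ln 2) \<le> 1 / ln (2::real) - 1" by (rule ln_le_minus_one) (use ln2 in simp)
  also have "1 / ln (2::real) - 1 \<le> 1 / 2" using ln2 by (simp add: field_simps)
  also have "ln (ln (real n)) \<le> ln (ln (real n + 1))" using ln_n \<open>n \<ge> 2\<close> by (intro ln_mono) auto
  finally show ?thesis by simp
qed

lemma sum_inverse_primes_le_ln_ln:
  fixes Q :: "nat set"
  assumes fin: "finite Q" and primes: "\<forall>q\<in>Q. prime q" and n: "card Q \<ge> 2"
  shows "(\<Sum>q\<in>Q. 1 / real q) \<le> 2 * ln (ln (real (card Q) + 1)) + 5"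
proof -
  define n where "n = card Q"
  obtain J where J: "2 ^ J \<le> n" "n < 2 ^ Suc J"
    using ex_power_ivl1[of 2 n] n unfolding n_def by auto
  have "J \<ge> 1" using J n unfolding n_def by (cases J) auto
  let ?small = "{q\<in>Q. q \<le> n}" and ?large = "{q\<in>Q. n < q}"
  have "(\<Sum>q\<in>Q. 1 / real q) = (\<Sum>q\<in>?small. 1 / real q) + (\<Sum>q\<in>?large. 1 / real q)"
    using fin by (subst sum.union_disjoint[symmetric]) (auto intro: sum.cong)
  moreover have "(\<Sum>q\<in>?small. 1 / real q) \<le> 1 / 2 + 2 * harm J"
  proof -
    have "(\<Sum>q\<in>?small. 1 / real q) \<le> (\<Sum>p\<in>{p::nat. prime p \<and> p \<le> 2 ^ Suc J}. 1 / real p)"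
      using primes J by (intro sum_mono2) (auto intro: finite_subset[of _ "{..2 ^ Suc J}"])
    then show ?thesis using sum_inverse_primes_le_harm[of J] by linarith
  qed
  moreover have "(\<Sum>q\<in>?large. 1 / real q) \<le> 1"
  proof -
    have "card ?large \<le> n" unfolding n_def using fin by (intro card_mono) auto
    have "(\<Sum>q\<in>?large. 1 / real q) \<le> (\<Sum>q\<in>?large. 1 / real n)"
      using n unfolding n_def by (intro sum_mono) (auto simp: frac_le)
    also have "\<dots> = real (card ?large) / real n" by simp
    also have "\<dots> \<le> 1" using \<open>card ?large \<le> n\<close> n unfolding n_def by simp
    finally show ?thesis .
  qed
  moreover have "harm J \<le> 1 + ln (real J)"
    using euler_mascheroni_sequence_decreasing[of 1 J] \<open>J \<ge> 1\<close> by (simp add: harm_def)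
  ultimately show ?thesis using ln_log2_le_ln_ln[OF \<open>J \<ge> 1\<close> J(1)] unfolding n_def by linarith
qed

lemma exp_neg_le_one_minus:
  fixes x D :: real
  assumes "0 \<le> x" "1 \<le> D" "x \<le> (D - 1) / D"
  shows "exp (- D * x) \<le> 1 - x"
proof -
  have "(D - 1) / D \<le> 1" using assms by simp
  then have "x \<le> 1" using assms by linarith
  have "x * D \<le> D - 1" using assms by (simp add: field_simps)
  then have "1 \<le> (1 + D * x) * (1 - x)"
    using assms mult_nonneg_nonneg[of x "D - 1 - x * D"] by (simp add: algebra_simps)
  also have "(1 + D * x) * (1 - x) \<le> exp (D * x) * (1 - x)"
    using \<open>x \<le> 1\<close> by (intro mult_right_mono) auto
  finally show ?thesis by (simp add: exp_minus' field_simps)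
qed

lemma exp_neg_sum_le_prod_one_minus:
  fixes x :: "'i \<Rightarrow> real" and D :: real
  assumes "1 \<le> D" "\<forall>q\<in>set qs. 0 \<le> x q \<and> x q \<le> (D - 1) / D"
  shows "exp (- D * (\<Sum>q\<leftarrow>qs. x q)) \<le> (\<Prod>q\<leftarrow>qs. 1 - x q)"
  using assms(2)
proof (induction qs)
  case Nil
  then show ?case by simp
next
  case (Cons q qs)
  have xq: "0 \<le> x q" "x q \<le> (D - 1) / D" using Cons.prems by auto
  moreover have "(D - 1) / D \<le> 1" using assms(1) by simp
  ultimately have "x q \<le> 1" by linarith
  have "exp (- D * x q) \<le> 1 - x q" "0 \<le> 1 - x q"
    using exp_neg_le_one_minus[of "x q" D] assms(1) xq \<open>x q \<le> 1\<close> by auto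
  then have "exp (- D * x q) * exp (- D * (\<Sum>q\<leftarrow>qs. x q)) \<le> (1 - x q) * (\<Prod>q\<leftarrow>qs. 1 - x q)"
    using Cons by (intro mult_mono) auto
  then show ?case by (simp add: algebra_simps flip: exp_add)
qed

lemma power_div_fact_le_exp:
  fixes x :: real
  assumes "0 \<le> x"
  shows "x ^ n / fact n \<le> exp x"
proof -
  have "(\<Sum>k\<in>{n}. x ^ k /\<^sub>R fact k) \<le> (\<Sum>k. x ^ k /\<^sub>R fact k)"
    using assms by (intro sum_le_suminf summable_exp_generic) auto
  then show ?thesis by (simp add: exp_def divide_inverse mult.commute)
qed

lemma power_div_fact_le_exp_neg:
  fixes s g D :: real and K :: nat
  assumes s: "0 \<le> s" and g: "exp 1 \<le> g" and gD: "D \<le> g * (ln g - 1)" and K: "g * s + 1 \<le> real K"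
  shows "s ^ K / fact K \<le> exp 1 / g * exp (- D * s)"
proof -
  define L where "L = ln g - 1"
  have "0 < g" using g exp_gt_zero[of 1] by linarith
  then have "0 \<le> L" using g unfolding L_def by (metis diff_ge_0_iff_ge exp_le_cancel_iff exp_ln)
  have eg: "exp 1 / g = exp (- L)" using \<open>0 < g\<close> by (simp add: L_def exp_diff exp_minus field_simps)
  have "0 < real K" using K s \<open>0 < g\<close> by (smt (verit) mult_nonneg_nonneg)
  have exp_K: "exp (real K) = exp 1 ^ K" by (metis exp_of_nat_mult mult.right_neutral)
  have "s ^ K / fact K = (s / real K) ^ K * (real K ^ K / fact K)"
    using \<open>0 < real K\<close> by (simp add: power_divide)
  also have "\<dots> \<le> (s / real K) ^ K * exp (real K)"
    using s by (intro mult_left_mono power_div_fact_le_exp) auto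
  also have "\<dots> = (s / real K * exp 1) ^ K"
    unfolding exp_K by (rule power_mult_distrib[symmetric])
  also have "\<dots> \<le> (exp 1 / g) ^ K"
  proof -
    have "s / real K \<le> 1 / g" using K \<open>0 < real K\<close> \<open>0 < g\<close> by (simp add: field_simps)
    then have "s / real K * exp 1 \<le> exp 1 / g" using mult_right_mono[of _ _ "exp 1"] by fastforce
    then show ?thesis using s \<open>0 < real K\<close> by (intro power_mono) auto
  qed
  also have "\<dots> = exp (- L * real K)" unfolding eg by (simp flip: exp_of_nat_mult add: mult.commute)
  also have "\<dots> \<le> exp (- L * (g * s + 1))" using K \<open>0 \<le> L\<close> by (simp add: mult_left_mono)
  also have "\<dots> = exp (- L) * exp (- (g * L) * s)" by (simp add: algebra_simps flip: exp_add)
  also have "\<dots> \<le> exp (- L) * exp (- D * s)"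
    using gD s unfolding L_def by (simp add: mult_right_mono)
  finally show ?thesis unfolding eg .
qed

lemma le_add_4_mult_ln_minus_1:
  fixes d :: nat
  assumes "d \<ge> 1"
  shows "real d + 1 \<le> (real d + 4) * (ln (real d + 4) - 1)"
proof (cases "d \<le> 3")
  case True
  have "exp (8 / 5 :: real) ^ 5 = exp 1 ^ 8" by (simp flip: exp_of_nat_mult)
  also have "\<dots> < (272 / 100) ^ 8" using e_less_272 by (intro power_strict_mono) auto
  also have "\<dots> < (5::real) ^ 5" by (simp add: power_divide divide_less_eq)
  finally have "exp (8 / 5 :: real) < 5" by (rule power_less_imp_less_base) simp
  then have "8 / 5 < ln (5::real)" by (metis exp_less_cancel_iff exp_ln zero_less_numeral)
  also have "ln 5 \<le> ln (real d + 4)" using assms by simp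
  finally have "(real d + 4) * (3 / 5) \<le> (real d + 4) * (ln (real d + 4) - 1)"
    by (intro mult_left_mono) auto
  moreover have "real d + 1 \<le> (real d + 4) * (3 / 5)" using True by (simp add: algebra_simps)
  ultimately show ?thesis by linarith
next
  case False
  have "exp (2::real) = exp 1 ^ 2" by (simp flip: exp_of_nat_mult)
  also have "\<dots> < (272 / 100) ^ 2" using e_less_272 by (intro power_strict_mono) auto
  also have "\<dots> < 8" by (simp add: power_divide divide_less_eq)
  finally have "2 < ln (8::real)" by (metis exp_less_cancel_iff exp_ln zero_less_numeral)
  also have "ln 8 \<le> ln (real d + 4)" using False by simp
  finally have "(real d + 4) * 1 \<le> (real d + 4) * (ln (real d + 4) - 1)"
    by (intro mult_left_mono) auto
  then show ?thesis by (rule order_trans[rotated]) simp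
qed

text \<open>With \<open>m + 1 \<ge> (d + 4) s + 1\<close> the truncation error of \<^const>\<open>trunc_prod_minus\<close> is at most a
  fraction \<open>exp 1 / (d + 4) < 1 - exp (-1)\<close> of the lower bound \<open>exp (- (d + 1) s)\<close> of the full product.\<close>
lemma trunc_prod_minus_ge_exp:
  fixes x :: "'i \<Rightarrow> real" and d m :: nat
  assumes x: "\<forall>q\<in>set qs. 0 \<le> x q \<and> x q \<le> real d / (real d + 1)" and "d > 0"
    and m: "(real d + 4) * (\<Sum>q\<leftarrow>qs. x q) + 1 \<le> real (Suc m)"
  shows "exp (- (real d + 1) * (\<Sum>q\<leftarrow>qs. x q) - 1) \<le> trunc_prod_minus x m qs"
proof -
  define s D g where "s = (\<Sum>q\<leftarrow>qs. x q)" and "D = real d + 1" and "g = real d + 4"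
  have "0 \<le> s" unfolding s_def using x by (auto intro!: sum_list_nonneg)
  have x1: "\<forall>q\<in>set qs. 0 \<le> x q \<and> x q \<le> 1"
  proof
    fix q assume "q \<in> set qs"
    moreover have "real d / (real d + 1) \<le> 1" by simp
    ultimately show "0 \<le> x q \<and> x q \<le> 1" using x by (meson order_trans)
  qed
  have e: "exp 1 < (272 / 100 :: real)" "5 / 2 \<le> exp (1::real)"
    using e_less_272 exp_lower_Taylor_quadratic[of 1] by simp_all
  have "g \<ge> 5" using \<open>d > 0\<close> unfolding g_def by simp
  have "exp (- D * s) \<le> (\<Prod>q\<leftarrow>qs. 1 - x q)"
    unfolding s_def D_def using x by (intro exp_neg_sum_le_prod_one_minus) auto
  moreover have "\<bar>trunc_prod_minus x m qs - (\<Prod>q\<leftarrow>qs. 1 - x q)\<bar> \<le> s ^ Suc m / fact (Suc m)"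
    unfolding s_def by (rule trunc_prod_minus_approx[OF x1])
  moreover have "s ^ Suc m / fact (Suc m) \<le> exp 1 / g * exp (- D * s)"
  proof (rule power_div_fact_le_exp_neg)
    show "exp 1 \<le> g" using e \<open>g \<ge> 5\<close> by simp
    show "D \<le> g * (ln g - 1)" using le_add_4_mult_ln_minus_1[of d] \<open>d > 0\<close> unfolding g_def D_def by simp
    show "g * s + 1 \<le> real (Suc m)" using m unfolding g_def s_def .
  qed (rule \<open>0 \<le> s\<close>)
  moreover have "exp (-1) \<le> 1 - exp 1 / g"
  proof -
    have "exp 1 / g \<le> (272 / 100) / 5" using e \<open>g \<ge> 5\<close> by (intro frac_le) auto
    moreover have "exp (-1) \<le> 1 / (5 / 2 :: real)"
      unfolding exp_minus' using e by (intro divide_left_mono) auto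
    ultimately show ?thesis by simp
  qed
  then have "exp (-1) * exp (- D * s) \<le> (1 - exp 1 / g) * exp (- D * s)"
    by (intro mult_right_mono) auto
  ultimately have "exp (-1) * exp (- D * s) \<le> trunc_prod_minus x m qs"
    by (simp add: algebra_simps abs_le_iff)
  moreover have "exp (- (real d + 1) * s - 1) = exp (-1) * exp (- D * s)"
    unfolding D_def exp_add[symmetric] by (rule arg_cong[where f = exp]) linarith
  ultimately show ?thesis unfolding s_def by simp
qed

section \<open>Choosing the truncation depth\<close>

text \<open>With \<open>D = d + 1\<close>, \<open>l = ln (D * card Q)\<close>, \<open>La = ln (ln (card Q + 1))\<close> and
  \<open>m + 1 \<le> (D + 3) * s + 3\<close>, the left-hand side bounds \<open>ln ((1 + d * card Q) ^ m * exp (D * s + 1))\<close>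
  and the right-hand side is \<open>ln (E_bound Q d)\<close>.\<close>
lemma exponent_budget_one_prime:
  fixes D l s La :: real
  assumes D: "2 \<le> D" and l: "2 / 3 \<le> l" and s: "0 \<le> s" "s \<le> (D - 1) / 2" and La: "-1 \<le> La"
  shows "((D + 3) * s + 2) * l + D * s + 1 \<le> 4 * D\<^sup>2 * (3 + La) * l"
proof -
  have "1 * (D * s + 1) \<le> (3 / 2 * l) * (D * s + 1)"
    using l D s by (intro mult_right_mono) auto
  then have "((D + 3) * s + 2) * l + D * s + 1 \<le> ((5 / 2 * D + 3) * s + 7 / 2) * l"
    by (simp add: algebra_simps)
  also have "\<dots> \<le> ((5 / 2 * D + 3) * ((D - 1) / 2) + 7 / 2) * l"
    using s D l by (intro mult_right_mono add_right_mono mult_left_mono) auto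
  also have "\<dots> \<le> (4 * D\<^sup>2 * 2) * l"
  proof (rule mult_right_mono)
    have "2 * D \<le> D * D" using D by (intro mult_right_mono) auto
    moreover have "(5 / 2 * D + 3) * ((D - 1) / 2) + 7 / 2 = 5 / 4 * (D * D) + D / 4 + 2"
      by (simp add: field_simps)
    ultimately show "(5 / 2 * D + 3) * ((D - 1) / 2) + 7 / 2 \<le> 4 * D\<^sup>2 * 2"
      using D unfolding power2_eq_square by linarith
  qed (use l in simp)
  also have "\<dots> \<le> 4 * D\<^sup>2 * (3 + La) * l"
    using La l by (intro mult_right_mono mult_left_mono) auto
  finally show ?thesis .
qed

lemma exponent_budget_many_primes:
  fixes D l s La :: real
  assumes D: "2 \<le> D" and l: "4 / 3 \<le> l" and s: "0 \<le> s" "s \<le> (D - 1) * (2 * La + 5)" and La: "0 \<le> La"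
  shows "((D + 3) * s + 2) * l + D * s + 1 \<le> 4 * D\<^sup>2 * (3 + La) * l"
proof -
  have "1 * (D * s + 1) \<le> (3 / 4 * l) * (D * s + 1)"
    using l D s by (intro mult_right_mono) auto
  then have "((D + 3) * s + 2) * l + D * s + 1 \<le> ((7 / 4 * D + 3) * s + 11 / 4) * l"
    by (simp add: algebra_simps)
  also have "\<dots> \<le> ((7 / 4 * D + 3) * ((D - 1) * (2 * La + 5)) + 11 / 4) * l"
    using s D l by (intro mult_right_mono add_right_mono mult_left_mono) auto
  also have "\<dots> \<le> 4 * D\<^sup>2 * (3 + La) * l"
  proof -
    have "0 \<le> La * ((D - 5 / 2)\<^sup>2 + 23 / 4)" using La by simp
    moreover have "0 \<le> (D - 25 / 26)\<^sup>2" by simp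
    moreover have "4 * D\<^sup>2 * (3 + La) - ((7 / 4 * D + 3) * ((D - 1) * (2 * La + 5)) + 11 / 4)
        = La * ((D - 5 / 2)\<^sup>2 + 23 / 4) / 2 + 13 / 4 * (D - 25 / 26)\<^sup>2 + (49 / 4 - 625 / 208)"
      by (simp add: power2_eq_square field_simps)
    ultimately have "(7 / 4 * D + 3) * ((D - 1) * (2 * La + 5)) + 11 / 4 \<le> 4 * D\<^sup>2 * (3 + La)"
      by linarith
    then show ?thesis using l by (intro mult_right_mono) auto
  qed
  finally show ?thesis .
qed

lemma E_bound_eq_exp:
  assumes "Q \<noteq> {}" "finite Q"
  shows "E_bound Q d = exp (4 * (real d + 1)\<^sup>2 * (3 + ln (ln (real (card Q) + 1)))
    * ln ((real d + 1) * real (card Q)))"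
proof -
  have "0 < card Q" using assms by (simp add: card_gt_0_iff)
  then show ?thesis by (simp add: E_bound_def powr_def add.commute mult.commute)
qed

lemma exponent_budget:
  fixes d :: nat and Q :: "nat set" and s :: real
  assumes d: "d > 0" and Q: "finite Q" "Q \<noteq> {}" "\<forall>q\<in>Q. prime q"
    and s: "0 \<le> s" "s \<le> real d * (\<Sum>q\<in>Q. 1 / real q)"
  shows "((real d + 4) * s + 2) * ln ((real d + 1) * real (card Q)) + (real d + 1) * s + 1
    \<le> 4 * (real d + 1)\<^sup>2 * (3 + ln (ln (real (card Q) + 1))) * ln ((real d + 1) * real (card Q))"
proof -
  define n D l La where "n = card Q" and "D = real d + 1" and "l = ln (D * real n)"
    and "La = ln (ln (real n + 1))"
  have "n \<ge> 1" "D \<ge> 2" using Q d unfolding n_def D_def by (auto simp: Suc_le_eq card_gt_0_iff)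
  have ln2: "2 / 3 \<le> ln (2::real)" by (rule ln2_ge_two_thirds)
  have "2 * real n \<le> D * real n" using \<open>D \<ge> 2\<close> by (intro mult_right_mono) auto
  then have Dn: "2 * real n \<le> D * real n" "0 < D * real n" using \<open>n \<ge> 1\<close> by auto
  have "((D + 3) * s + 2) * l + D * s + 1 \<le> 4 * D\<^sup>2 * (3 + La) * l"
  proof (cases "n = 1")
    case True
    then obtain q where "Q = {q}" unfolding n_def by (rule card_1_singletonE)
    then have "(\<Sum>q\<in>Q. 1 / real q) \<le> 1 / 2" using Q(3) prime_ge_2_nat[of q] by simp
    then have "real d * (\<Sum>q\<in>Q. 1 / real q) \<le> real d * (1 / 2)" by (rule mult_left_mono) simp
    then have "s \<le> (D - 1) / 2" using s unfolding D_def by simp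
    moreover have "2 / 3 \<le> l"
    proof -
      have "ln 2 \<le> l" unfolding l_def using Dn True by (intro ln_mono) auto
      then show ?thesis using ln2 by linarith
    qed
    moreover have "-1 \<le> La"
    proof -
      have "5 / 2 \<le> exp (1::real)" using exp_lower_Taylor_quadratic[of 1] by simp
      then have "exp (-1) \<le> (2 / 5 :: real)" by (simp add: exp_minus' field_simps)
      then have "exp (-1) \<le> ln (2::real)" using ln2 by linarith
      then show ?thesis unfolding La_def True using ln_mono[of "exp (-1)" "ln 2"] by simp
    qed
    ultimately show ?thesis using exponent_budget_one_prime \<open>D \<ge> 2\<close> s(1) by blast
  next
    case False
    then have "n \<ge> 2" using \<open>n \<ge> 1\<close> by simp
    have "real d * (\<Sum>q\<in>Q. 1 / real q) \<le> real d * (2 * La + 5)"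
      using sum_inverse_primes_le_ln_ln[OF Q(1,3)] \<open>n \<ge> 2\<close> unfolding n_def La_def
      by (intro mult_left_mono) auto
    then have "s \<le> (D - 1) * (2 * La + 5)" using s unfolding D_def by simp
    moreover have "4 / 3 \<le> l"
    proof -
      have "2 \<le> real n" using \<open>n \<ge> 2\<close> by simp
      then have "2 * 2 \<le> D * real n" using \<open>D \<ge> 2\<close> by (intro mult_mono) auto
      then have "ln 4 \<le> l" unfolding l_def by (intro ln_mono) auto
      moreover have "ln (4::real) = 2 * ln 2" using ln_realpow[of 2 2] by simp
      ultimately show ?thesis using ln2 by linarith
    qed
    moreover have "0 \<le> La"
    proof -
      have "exp 1 \<le> (3::real)" by (rule exp_le)
      then have "1 \<le> ln (real n + 1)"
        using ln_mono[of "exp 1" "real n + 1"] \<open>n \<ge> 2\<close> by simp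
      then show ?thesis unfolding La_def by simp
    qed
    ultimately show ?thesis using exponent_budget_many_primes \<open>D \<ge> 2\<close> s(1) by blast
  qed
  moreover have "D + 3 = real d + 4" unfolding D_def by simp
  ultimately show ?thesis unfolding n_def l_def La_def D_def[symmetric] by simp
qed

lemma power_mult_exp_le_E_bound:
  fixes d m :: nat and Q :: "nat set" and s :: real
  assumes d: "d > 0" and Q: "finite Q" "Q \<noteq> {}" "\<forall>q\<in>Q. prime q"
    and s: "0 \<le> s" "s \<le> real d * (\<Sum>q\<in>Q. 1 / real q)"
    and m: "real (Suc m) \<le> (real d + 4) * s + 3"
  shows "(1 + real d * real (card Q)) ^ m * exp ((real d + 1) * s + 1) \<le> E_bound Q d"
proof -
  define n l where "n = card Q" and "l = ln ((real d + 1) * real n)"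
  have "n \<ge> 1" using Q unfolding n_def by (auto simp: Suc_le_eq card_gt_0_iff)
  have "real m * ln (1 + real d * real n) \<le> ((real d + 4) * s + 2) * l"
  proof (rule mult_mono)
    show "real m \<le> (real d + 4) * s + 2" using m by simp
    show "ln (1 + real d * real n) \<le> l"
      unfolding l_def using \<open>n \<ge> 1\<close> by (intro ln_mono) (auto simp: algebra_simps add_pos_nonneg)
  qed (use s in auto)
  then have "real m * ln (1 + real d * real n) + ((real d + 1) * s + 1) \<le> ln (E_bound Q d)"
    using exponent_budget[OF d Q s] unfolding E_bound_eq_exp[OF Q(2,1)] n_def l_def by simp
  then have "exp (real m * ln (1 + real d * real n) + ((real d + 1) * s + 1)) \<le> E_bound Q d"
    using Q by (subst (asm) exp_le_cancel_iff[symmetric]) (simp add: E_bound_eq_exp)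
  moreover have "0 < 1 + real d * real n" by (simp add: add_pos_nonneg)
  ultimately show ?thesis unfolding n_def by (simp add: exp_add exp_of_nat_mult)
qed

lemma exists_odd_Suc_between:
  fixes t :: real
  assumes "0 \<le> t"
  obtains m where "odd m" "t + 1 \<le> real (Suc m)" "real (Suc m) \<le> t + 3"
proof -
  define z where "z = nat \<lceil>(t + 1) / 2\<rceil>"
  have "0 < \<lceil>(t + 1) / 2\<rceil>" using assms by simp
  then have z: "real z = of_int \<lceil>(t + 1) / 2\<rceil>" "z \<ge> 1" unfolding z_def by (auto simp: Suc_le_eq)
  have "(t + 1) / 2 \<le> real z" "real z < (t + 1) / 2 + 1"
    unfolding z(1) by (simp, linarith)
  define m where "m = 2 * z - 1"
  then have "Suc m = 2 * z" using z(2) by simp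
  then have "real (Suc m) = 2 * real z" by (metis of_nat_mult of_nat_numeral)
  moreover have "t + 1 \<le> 2 * real z" using \<open>(t + 1) / 2 \<le> real z\<close> by (simp add: field_simps)
  moreover have "2 * real z \<le> t + 3" using \<open>real z < (t + 1) / 2 + 1\<close> by (simp add: field_simps)
  ultimately have "t + 1 \<le> real (Suc m)" "real (Suc m) \<le> t + 3" by simp_all
  moreover have "odd m" using \<open>Suc m = 2 * z\<close> by (metis even_Suc even_mult_iff even_numeral)
  ultimately show ?thesis using that by blast
qed

lemma sifted_residue_in_interval:
  fixes d :: nat and Q :: "nat set" and C :: "nat \<Rightarrow> int set" and P a b r :: int
  assumes d: "d > 0" and Q: "finite Q" "Q \<noteq> {}" "\<forall>q\<in>Q. prime q" "\<forall>q\<in>Q. d < q"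
    and C: "\<forall>q\<in>Q. C q \<subseteq> {0..<int q} \<and> card (C q) \<le> d"
    and P: "P > 0" "\<forall>q\<in>Q. coprime P (int q)"
    and ab: "a \<le> b" "E_bound Q d < real_of_int (b - a + 1) / real_of_int P"
  shows "\<exists>x\<in>{a..b}. [x = r] (mod P) \<and> (\<forall>q\<in>Q. x mod int q \<notin> C q)"
proof -
  define qs where "qs = sorted_list_of_set Q"
  have qs: "distinct qs" "set qs = Q" "length qs = card Q" using Q(1) by (auto simp: qs_def)
  define x where "x q = real (card (C q)) / real q" for q
  define s where "s = (\<Sum>q\<leftarrow>qs. x q)"
  have x: "\<forall>q\<in>set qs. 0 \<le> x q \<and> x q \<le> real d / (real d + 1)"
  proof
    fix q assume "q \<in> set qs"
    then have "card (C q) \<le> d" "d + 1 \<le> q" using C Q(4) qs(2) by auto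
    then show "0 \<le> x q \<and> x q \<le> real d / (real d + 1)"
      unfolding x_def by (auto intro!: frac_le)
  qed
  then have "0 \<le> s" unfolding s_def by (auto intro!: sum_list_nonneg)
  have "s = (\<Sum>q\<in>Q. x q)" unfolding s_def using qs by (simp add: sum_list_distinct_conv_sum_set)
  also have "\<dots> \<le> (\<Sum>q\<in>Q. real d * (1 / real q))"
    using C unfolding x_def by (intro sum_mono) (auto intro: divide_right_mono)
  finally have s: "s \<le> real d * (\<Sum>q\<in>Q. 1 / real q)" by (simp add: sum_distrib_left)
  obtain m where m: "odd m" "(real d + 4) * s + 1 \<le> real (Suc m)" "real (Suc m) \<le> (real d + 4) * s + 3"
    using exists_odd_Suc_between[of "(real d + 4) * s"] \<open>0 \<le> s\<close> by auto
  have T: "exp (- (real d + 1) * s - 1) \<le> trunc_prod_minus x m qs"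
    unfolding s_def using trunc_prod_minus_ge_exp[OF x d] m(2) s_def by blast
  have "trunc_prod_plus (\<lambda>q. real (card (C q))) m qs \<le> (1 + real d * real (card Q)) ^ m"
    using trunc_prod_plus_le_power[of qs _ "real d"] C qs by simp
  also have "\<dots> = (1 + real d * real (card Q)) ^ m * exp ((real d + 1) * s + 1) * exp (- (real d + 1) * s - 1)"
    by (simp add: mult.assoc algebra_simps flip: exp_add)
  also have "\<dots> \<le> E_bound Q d * exp (- (real d + 1) * s - 1)"
    using power_mult_exp_le_E_bound[OF d Q(1-3) \<open>0 \<le> s\<close> s m(3)] by (intro mult_right_mono) auto
  also have "\<dots> \<le> E_bound Q d * trunc_prod_minus x m qs"
    using T E_bound_eq_exp[OF Q(2,1), of d] by (intro mult_left_mono) auto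
  also have "\<dots> < real_of_int (b - a + 1) / real_of_int P * trunc_prod_minus x m qs"
    using ab(2) T by (intro mult_strict_right_mono) (auto intro: less_le_trans[OF exp_gt_zero])
  finally show ?thesis
    using sifted_cong_interval_nonempty[OF qs(1) _ _ P(1) _ ab(1) m(1), of C r] Q(4) C P(2) qs(2)
    unfolding x_def by (auto simp: Q)
qed

lemma sifted_residue_within_E_bound:
  fixes d :: nat and Q :: "nat set" and C :: "nat \<Rightarrow> int set" and P k r :: int
  assumes d: "d > 0" and Q: "finite Q" "Q \<noteq> {}" "\<forall>q\<in>Q. prime q" "\<forall>q\<in>Q. d < q"
    and C: "\<forall>q\<in>Q. C q \<subseteq> {0..<int q} \<and> card (C q) \<le> d"
    and P: "P > 0" "\<forall>q\<in>Q. coprime P (int q)"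
  shows "\<exists>x. k \<le> x \<and> real_of_int x \<le> real_of_int k + real_of_int P * E_bound Q d
    \<and> [x = r] (mod P) \<and> (\<forall>q\<in>Q. x mod int q \<notin> C q)"
proof -
  define N where "N = \<lfloor>real_of_int P * E_bound Q d\<rfloor>"
  have "0 \<le> N" unfolding N_def E_bound_eq_exp[OF Q(2,1)] using P(1) by simp
  moreover have "E_bound Q d < real_of_int (k + N - k + 1) / real_of_int P"
  proof -
    have "real_of_int P * E_bound Q d < real_of_int N + 1"
      unfolding N_def by (rule real_of_int_floor_add_one_gt)
    then show ?thesis using P(1) by (simp add: field_simps)
  qed
  ultimately obtain x where "x \<in> {k..k + N}" "[x = r] (mod P)" "\<forall>q\<in>Q. x mod int q \<notin> C q"
    using sifted_residue_in_interval[OF d Q C P, of k "k + N" r] by auto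
  moreover have "real_of_int N \<le> real_of_int P * E_bound Q d" unfolding N_def by simp
  ultimately show ?thesis by auto
qed

theorem theorem2:
  fixes d :: nat and M Q :: "nat set" and b :: "nat \<Rightarrow> int"
    and c :: "nat \<Rightarrow> nat \<Rightarrow> int" and k :: int
  assumes "d > 0"
    and "finite M" and "\<forall>m\<in>M. m > 0"
    and "finite Q" and "Q \<noteq> {}" and "\<forall>q\<in>Q. prime q"
    and "\<forall>u\<in>M \<union> Q. \<forall>v\<in>M \<union> Q. u \<noteq> v \<longrightarrow> coprime u v"
    and "M \<inter> Q = {}"
    and "Min Q > d"
  shows "\<exists>x::int. k \<le> x \<and> real_of_int x \<le> real_of_int k + real (\<Prod>M) * E_bound Q d
     \<and> (\<forall>m\<in>M. [x = b m] (mod int m))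
     \<and> (\<forall>q\<in>Q. \<forall>i\<in>{1..d}. \<not> [x = c q i] (mod int q))"
proof -
  obtain r where r: "\<And>x. (\<forall>m\<in>M. [x = b m] (mod int m)) \<longleftrightarrow> [x = r] (mod int (\<Prod>M))"
    using chinese_remainder_iff_int[OF assms(2), of b] assms(7) by blast
  define C where "C q = (\<lambda>i. c q i mod int q) ` {1..d}" for q
  have "\<forall>q\<in>Q. d < q" using assms(4,9) by (auto dest: Min_le[OF assms(4)])
  then have "\<forall>q\<in>Q. C q \<subseteq> {0..<int q} \<and> card (C q) \<le> d"
    unfolding C_def by (auto intro: card_image_le[THEN order_trans])
  moreover have "\<forall>q\<in>Q. coprime (int (\<Prod>M)) (int q)"
    using assms(7,8) by (auto intro!: prod_coprime_left simp: disjoint_iff) (metis Un_iff)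
  moreover have "int (\<Prod>M) > 0" using assms(3) by (simp add: prod_pos)
  ultimately obtain x where x: "k \<le> x" "real_of_int x \<le> real_of_int k + real (\<Prod>M) * E_bound Q d"
    "[x = r] (mod int (\<Prod>M))" "\<forall>q\<in>Q. x mod int q \<notin> C q"
    using sifted_residue_within_E_bound[OF assms(1,4,5,6) \<open>\<forall>q\<in>Q. d < q\<close>, of C "int (\<Prod>M)" k r] by auto
  moreover have "\<not> [x = c q i] (mod int q)" if "q \<in> Q" "i \<in> {1..d}" for q i
    using x(4) that unfolding C_def cong_def by auto
  ultimately show ?thesis using r by auto
qed

end
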